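(* Let $L,J\ge0$ be integers and let $Q_{\ell,j}(x)$, $0\le\ell\le L$, $0\le j\le J$, be polynomials with nonnegative coefficients. With the allowed weighted paths defined from these polynomials as in the context, set, for $k\ge0$, \[ F_{k,0}(x)=\sum_{n\ge0}\ \sum_{p\in\mathcal P_{n,k}}w(p)\,x^n,\qquad F(x,u)=\sum_{k\ge0}F_{k,0}(x)u^k , \] where $\mathcal P_{n,k}$ is the multiset of allowed paths from $(0,k)$ to $(n,0)$. Then $F(x,u)$ satisfies \[ F(x,u)=1+x\sum_{\ell=0}^L\sum_{j=0}^J Q_{\ell,j}(x)\,u^j\,\Delta^\ell F(x,u), \] and it is the unique formal power series solution of this equation.
   Context: For $G(x,u)=\sum_{k\ge0}G_k(x)u^k$ and $\ell\ge1$, $\Delta^\ell G(x,u)=\sum_{k\ge0}G_{k+\ell}(x)u^k$, and $\Delta^0G=G$. Step model: for each level $h\ge0$, the multiset $\mathcal S_h$ of steps allowed at level $h$ contains, for every triple $(\ell,j,r)$ with $0\le\ell\le L$, $0\le j\le\min(h,J)$, $r\ge0$ and $[x^r]Q_{\ell,j}(x)\ne0$, one (labelled) step with displacement $(1+r,\ell-j)$ and weight $w=[x^r]Q_{\ell,j}(x)$; distinct triples give distinct elements of the multiset even if their displacements coincide. An allowed path starting at level $k$ is a finite sequence $s_1\cdots s_M$ ($M\ge0$) of labelled steps, visiting the points $(0,k),(0,k)+s_1,(0,k)+s_1+s_2,\dots$, such that each step $s_m$ belongs to $\mathcal S_h$ where $h$ is the second coordinate (level) of the point at which $s_m$ starts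 (levels then automatically stay $\ge0$). Its weight is $w(p)=\prod_{m=1}^M w(s_m)$, the empty path having weight $1$. *)

theory Defs
  imports "HOL-Computational_Algebra.Computational_Algebra"
begin

text \<open>A labelled step is a triple (l, j, r): displacement (1 + r, l - j),
  weight coeff (Q l j) r.  A path is a list of labelled steps.\<close>

type_synonym step = "nat \<times> nat \<times> nat"

fun path_ok :: "nat \<Rightarrow> nat \<Rightarrow> (nat \<Rightarrow> nat \<Rightarrow> real poly) \<Rightarrow> nat \<Rightarrow> step list \<Rightarrow> bool" where
  "path_ok L J Q h [] = True"
| "path_ok L J Q h ((l, j, r) # s) =
     (l \<le> L \<and> j \<le> min h J \<and> coeff (Q l j) r \<noteq> 0 \<and> path_ok L J Q (h + l - j) s)"

fun final_level :: "nat \<Rightarrow> step list \<Rightarrow> nat" where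
  "final_level h [] = h"
| "final_level h ((l, j, r) # s) = final_level (h + l - j) s"

definition path_len :: "step list \<Rightarrow> nat" where
  "path_len s = sum_list (map (\<lambda>(l, j, r). 1 + r) s)"

definition path_weight :: "(nat \<Rightarrow> nat \<Rightarrow> real poly) \<Rightarrow> step list \<Rightarrow> real" where
  "path_weight Q s = prod_list (map (\<lambda>(l, j, r). coeff (Q l j) r) s)"

definition paths :: "nat \<Rightarrow> nat \<Rightarrow> (nat \<Rightarrow> nat \<Rightarrow> real poly) \<Rightarrow> nat \<Rightarrow> nat \<Rightarrow> step list set" where
  "paths L J Q n k = {s. path_ok L J Q k s \<and> path_len s = n \<and> final_level k s = 0}"

text \<open>Bivariate series F(x,u) as a power series in u whose coefficients are
  power series in x: the u^k coefficient is F_{k,0}(x).\<close>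
definition Fser :: "nat \<Rightarrow> nat \<Rightarrow> (nat \<Rightarrow> nat \<Rightarrow> real poly) \<Rightarrow> real fps fps" where
  "Fser L J Q = Abs_fps (\<lambda>k. Abs_fps (\<lambda>n. \<Sum>p\<in>paths L J Q n k. path_weight Q p))"

definition Delta :: "nat \<Rightarrow> 'a::zero fps \<Rightarrow> 'a fps" where
  "Delta l G = Abs_fps (\<lambda>k. G $ (k + l))"

text \<open>The functional equation, with x = fps_const fps_X and u = fps_X.\<close>
definition rhs :: "nat \<Rightarrow> nat \<Rightarrow> (nat \<Rightarrow> nat \<Rightarrow> real poly) \<Rightarrow> real fps fps \<Rightarrow> real fps fps" where
  "rhs L J Q G = 1 + fps_const fps_X *
     (\<Sum>l\<le>L. \<Sum>j\<le>J. fps_const (fps_of_poly (Q l j)) * fps_X ^ j * Delta l G)"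

end

theory Submission
  imports Defs
begin

text \<open>Splitting off the first step of a path shows that the path sums satisfy the same
  recurrence as the coefficients of the right-hand side of the functional equation.  Because
  of the factor x, the coefficient of x^(m+1) on the right-hand side only involves
  coefficients of x^n with n \<le> m, so induction on the x-degree shows that the equation has
  at most one solution.  The nonnegativity of the coefficients plays no role.\<close>

lemma path_len_Nil [simp]: "path_len [] = 0"
  by (simp add: path_len_def)

lemma path_len_Cons [simp]: "path_len ((l, j, r) # s) = 1 + r + path_len s"
  by (simp add: path_len_def)

lemma path_len_eq_0_iff [simp]: "path_len s = 0 \<longleftrightarrow> s = []"
  by (cases s) auto

lemma path_weight_Nil [simp]: "path_weight Q [] = 1"
  by (simp add: path_weight_def)

lemma path_weight_Cons [simp]: "path_weight Q ((l, j, r) # s) = coeff (Q l j) r * path_weight Q s"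
  by (simp add: path_weight_def)

lemma path_ok_imp_bounded:
  assumes "path_ok L J Q h s"
  shows "set s \<subseteq> {..L} \<times> {..J} \<times> {..path_len s} \<and> length s \<le> path_len s"
  using assms
proof (induction s arbitrary: h)
  case Nil
  then show ?case by simp
next
  case (Cons t s)
  obtain l j r where t: "t = (l, j, r)" by (cases t)
  with Cons.prems have "path_ok L J Q (h + l - j) s" "l \<le> L" "j \<le> J" by auto
  with Cons.IH show ?case by (fastforce simp: t)
qed

lemma finite_paths: "finite (paths L J Q n k)"
proof (rule finite_subset)
  show "paths L J Q n k \<subseteq> {s. set s \<subseteq> {..L} \<times> {..J} \<times> {..n} \<and> length s \<le> n}"
    using path_ok_imp_bounded unfolding paths_def by fastforce
  show "finite {s. set s \<subseteq> {..L} \<times> {..J} \<times> {..n} \<and> length s \<le> n}"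
    by (intro finite_lists_length_le) auto
qed

lemma paths_0: "paths L J Q 0 k = (if k = 0 then {[]} else {})"
  by (auto simp: paths_def)

definition first_steps :: "nat \<Rightarrow> nat \<Rightarrow> (nat \<Rightarrow> nat \<Rightarrow> real poly) \<Rightarrow> nat \<Rightarrow> nat \<Rightarrow> step set" where
  "first_steps L J Q m k = {(l, j, r). l \<le> L \<and> j \<le> min k J \<and> r \<le> m \<and> coeff (Q l j) r \<noteq> 0}"

lemma finite_first_steps: "finite (first_steps L J Q m k)"
  by (rule finite_subset[of _ "{..L} \<times> {..J} \<times> {..m}"]) (auto simp: first_steps_def)

lemma Cons_in_paths_Suc_iff:
  "(l, j, r) # s \<in> paths L J Q (Suc m) k \<longleftrightarrow>
     (l, j, r) \<in> first_steps L J Q m k \<and> s \<in> paths L J Q (m - r) (k + l - j)"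
  by (auto simp: paths_def first_steps_def)

lemma paths_Suc:
  "paths L J Q (Suc m) k =
     (\<Union>(l, j, r)\<in>first_steps L J Q m k. (#) (l, j, r) ` paths L J Q (m - r) (k + l - j))"
proof (intro equalityI subsetI)
  fix s
  assume s: "s \<in> paths L J Q (Suc m) k"
  then obtain l j r s' where s_eq: "s = (l, j, r) # s'"
    by (cases s) (auto simp: paths_def)
  with s have "(l, j, r) \<in> first_steps L J Q m k" "s' \<in> paths L J Q (m - r) (k + l - j)"
    by (simp_all add: Cons_in_paths_Suc_iff)
  then show "s \<in> (\<Union>(l, j, r)\<in>first_steps L J Q m k. (#) (l, j, r) ` paths L J Q (m - r) (k + l - j))"
    unfolding s_eq by blast
qed (auto simp: Cons_in_paths_Suc_iff)

text \<open>The coefficient of x^(m+1) u^k in x Q(x) u^j \<Delta>^l G(x,u), summed over l and j, where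
  a h n is the coefficient of x^n u^h in G.\<close>

definition first_step_sum ::
    "nat \<Rightarrow> nat \<Rightarrow> (nat \<Rightarrow> nat \<Rightarrow> real poly) \<Rightarrow> (nat \<Rightarrow> nat \<Rightarrow> real) \<Rightarrow> nat \<Rightarrow> nat \<Rightarrow> real" where
  "first_step_sum L J Q a k m =
     (\<Sum>l\<le>L. \<Sum>j\<le>J. if j \<le> k then (\<Sum>r\<le>m. coeff (Q l j) r * a (k + l - j) (m - r)) else 0)"

lemma first_step_sum_cong:
  assumes "\<And>h n. n \<le> m \<Longrightarrow> a h n = b h n"
  shows "first_step_sum L J Q a k m = first_step_sum L J Q b k m"
  unfolding first_step_sum_def using assms by (intro sum.cong if_cong refl) auto

definition path_sum :: "nat \<Rightarrow> nat \<Rightarrow> (nat \<Rightarrow> nat \<Rightarrow> real poly) \<Rightarrow> nat \<Rightarrow> nat \<Rightarrow> real" where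
  "path_sum L J Q n k = (\<Sum>p\<in>paths L J Q n k. path_weight Q p)"

lemma Fser_nth_nth: "Fser L J Q $ k $ n = path_sum L J Q n k"
  by (simp add: Fser_def path_sum_def)

lemma path_sum_0: "path_sum L J Q 0 k = (if k = 0 then 1 else 0)"
  by (simp add: path_sum_def paths_0)

lemma path_sum_Suc:
  "path_sum L J Q (Suc m) k = first_step_sum L J Q (\<lambda>h n. path_sum L J Q n h) k m"
proof -
  let ?T = "first_steps L J Q m k"
  let ?B = "\<lambda>(l, j, r). (#) (l, j, r) ` paths L J Q (m - r) (k + l - j)"
  let ?f = "\<lambda>(l, j, r). if j \<le> k then coeff (Q l j) r * path_sum L J Q (m - r) (k + l - j) else 0"
  have "path_sum L J Q (Suc m) k = (\<Sum>t\<in>?T. \<Sum>s\<in>?B t. path_weight Q s)"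
    unfolding path_sum_def paths_Suc
  proof (rule sum.UNION_disjoint)
    show "\<forall>t\<in>?T. \<forall>t'\<in>?T. t \<noteq> t' \<longrightarrow> ?B t \<inter> ?B t' = {}"
      by fastforce
  qed (auto simp: finite_first_steps finite_paths)
  also have "\<dots> = sum ?f ?T"
  proof (intro sum.cong refl)
    fix t
    assume "t \<in> ?T"
    then obtain l j r where t: "t = (l, j, r)" and "j \<le> k"
      by (auto simp: first_steps_def)
    then show "(\<Sum>s\<in>?B t. path_weight Q s) = ?f t"
      by (simp add: sum.reindex path_sum_def sum_distrib_left)
  qed
  also have "\<dots> = sum ?f ({..L} \<times> {..J} \<times> {..m})"
    by (intro sum.mono_neutral_left) (auto simp: first_steps_def split: if_splits)
  also have "\<dots> = (\<Sum>l\<le>L. \<Sum>j\<le>J. \<Sum>r\<le>m. ?f (l, j, r))"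
    by (simp add: sum.cartesian_product)
  also have "\<dots> = first_step_sum L J Q (\<lambda>h n. path_sum L J Q n h) k m"
    unfolding first_step_sum_def by (intro sum.cong refl) simp
  finally show ?thesis .
qed

lemma rhs_nth_nth_0: "rhs L J Q G $ k $ 0 = (if k = 0 then 1 else 0)"
  by (simp add: rhs_def fps_X_mult_nth fps_mult_left_const_nth)

lemma rhs_nth_nth_Suc: "rhs L J Q G $ k $ Suc m = first_step_sum L J Q (\<lambda>h n. G $ h $ n) k m"
proof -
  have "(fps_const (fps_of_poly (Q l j)) * fps_X ^ j * Delta l G) $ k $ m =
      (if j \<le> k then (\<Sum>r\<le>m. coeff (Q l j) r * G $ (k + l - j) $ (m - r)) else 0)" for l j
  proof -
    have "(fps_const (fps_of_poly (Q l j)) * fps_X ^ j * Delta l G) $ k =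
        fps_of_poly (Q l j) * (if j \<le> k then G $ (k + l - j) else 0)"
      by (simp add: mult.assoc fps_mult_left_const_nth fps_X_power_mult_nth Delta_def not_less)
    then show ?thesis
      by (simp add: fps_mult_nth atLeast0AtMost)
  qed
  then show ?thesis
    by (simp add: rhs_def first_step_sum_def fps_mult_left_const_nth fps_X_mult_nth fps_sum_nth)
qed

lemma Fser_eq_rhs: "Fser L J Q = rhs L J Q (Fser L J Q)"
proof (intro fps_ext)
  fix k n
  show "Fser L J Q $ k $ n = rhs L J Q (Fser L J Q) $ k $ n"
    by (cases n) (simp_all add: Fser_nth_nth path_sum_0 path_sum_Suc rhs_nth_nth_0 rhs_nth_nth_Suc)
qed

lemma rhs_fixpoint_unique:
  assumes G: "G = rhs L J Q G" and H: "H = rhs L J Q H"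
  shows "G = H"
proof -
  have "G $ k $ n = H $ k $ n" for k n
  proof (induction n arbitrary: k rule: less_induct)
    case (less n)
    show ?case
    proof (cases n)
      case 0
      then show ?thesis by (subst G, subst H) (simp add: rhs_nth_nth_0)
    next
      case (Suc m)
      have "G $ k $ Suc m = first_step_sum L J Q (\<lambda>h n. G $ h $ n) k m"
        by (subst G) (simp add: rhs_nth_nth_Suc)
      also have "\<dots> = first_step_sum L J Q (\<lambda>h n. H $ h $ n) k m"
        using less Suc by (intro first_step_sum_cong) simp
      also have "\<dots> = H $ k $ Suc m"
        by (subst H) (simp add: rhs_nth_nth_Suc)
      finally show ?thesis using Suc by simp
    qed
  qed
  then show ?thesis by (intro fps_ext)
qed

theorem lemma1:
  fixes L J :: nat and Q :: "nat \<Rightarrow> nat \<Rightarrow> real poly"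
  assumes "\<And>l j i. l \<le> L \<Longrightarrow> j \<le> J \<Longrightarrow> coeff (Q l j) i \<ge> 0"
  shows "Fser L J Q = rhs L J Q (Fser L J Q)
         \<and> (\<forall>G :: real fps fps. G = rhs L J Q G \<longrightarrow> G = Fser L J Q)"
  using Fser_eq_rhs rhs_fixpoint_unique by blast

end
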